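(* Let $n\ge1$, let $U_1,\dots,U_n$ be independent Uniform$[0,1]$ random variables, and let $N_t=|\{i:U_i\le t\}|$ for $t\in[0,1]$. Let $t_0=n^{-1/2}$. Then for every $x>1$, $$\mathbb P\left[\sup_{t\in[0,t_0]}\frac{N_t}{1+nt}\ge x\right]\le\exp\!\left(n^{-1/2}+\tfrac12 n^{-1}\right)\exp(-\gamma_x x),$$ where $\gamma_x$ is the positive root $\gamma$ of $e^{\gamma}=1+\gamma x$. *)

theory Defs
  imports "HOL-Probability.Probability"
begin

definition unif_cube :: "nat \<Rightarrow> (nat \<Rightarrow> real) measure" where
  "unif_cube n = PiM {..<n} (\<lambda>_. uniform_measure lborel {0..1::real})"

definition Ncount :: "nat \<Rightarrow> real \<Rightarrow> (nat \<Rightarrow> real) \<Rightarrow> nat" where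
  "Ncount n t U = card {i\<in>{..<n}. U i \<le> t}"

definition gamma_root :: "real \<Rightarrow> real" where
  "gamma_root x = (THE g. g > 0 \<and> exp g = 1 + g * x)"

end

theory Submission
  imports Defs
begin

text \<open>
  Reveal the points in increasing order. Consider the state in which j points have been seen
  before time s and the remaining n - j points all lie above s, and give it the potential
  exp(\<gamma> j - (1 + \<gamma> x) n s) n^j / (n (n - 1) ... (n - j + 1)). Because
  e^\<gamma> = 1 + \<gamma> x, the potential is preserved on average when the next point arrives, so the
  probability of ever reaching a state with N_s \<ge> x (1 + n s), s \<le> n^(-1/2), is bounded by the
  initial potential 1 divided by the least ratio of potential to probability (1 - s)^(n - j) over
  such crossing states. The bounds n (n - 1) ... (n - j + 1) / n^j \<le> exp(-j (j - 1)/(2n)) and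
  1 - s \<le> exp(-s - s^2/2) show that this ratio is at least exp(\<gamma> x - n^(-1/2) - 1/(2n)).
\<close>

lemma one_minus_le_exp_quadratic:
  fixes t :: real
  assumes "0 \<le> t"
  shows "1 - t \<le> exp (- t - t^2/2)"
proof -
  let ?h = "\<lambda>t::real. exp (- t - t^2/2) - (1 - t)"
  have "?h 0 \<le> ?h t"
  proof (rule DERIV_nonneg_imp_nondecreasing[OF assms])
    fix y :: real
    assume y: "0 \<le> y" "y \<le> t"
    have d: "DERIV ?h y :> exp (- y - y^2/2) * (- 1 - y) + 1"
      by (auto intro!: derivative_eq_intros simp: power2_eq_square algebra_simps)
    have "1 + y \<le> exp y"
      by (rule exp_ge_add_one_self)
    also have "\<dots> \<le> exp (y + y^2/2)"
      by simp
    finally have "(1 + y) * exp (- y - y^2/2) \<le> exp (y + y^2/2) * exp (- y - y^2/2)"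
      by (rule mult_right_mono) simp
    also have "\<dots> = 1"
      by (simp add: exp_add[symmetric])
    finally have "exp (- y - y^2/2) * (- 1 - y) + 1 \<ge> 0"
      by (simp add: algebra_simps)
    with d show "\<exists>z. DERIV ?h y :> z \<and> 0 \<le> z"
      by blast
  qed
  then show ?thesis
    by simp
qed

lemma falling_fact_div_power_le_exp:
  fixes n j :: nat
  assumes "j \<le> n"
  shows "(\<Prod>i<j. real (n - i)) / real n ^ j \<le> exp (- (real j * (real j - 1) / (2 * real n)))"
proof -
  have "(\<Prod>i<j. real (n - i)) / real n ^ j = (\<Prod>i<j. real (n - i) / real n)"
    by (simp add: prod_dividef)
  also have "\<dots> = (\<Prod>i<j. 1 - real i / real n)"
    using assms by (intro prod.cong) (auto simp: of_nat_diff field_simps)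
  also have "\<dots> \<le> (\<Prod>i<j. exp (- (real i / real n)))"
  proof (rule prod_mono)
    fix i
    assume "i \<in> {..<j}"
    then have "real i / real n \<le> 1"
      using assms by (auto simp: field_simps)
    then show "0 \<le> 1 - real i / real n \<and> 1 - real i / real n \<le> exp (- (real i / real n))"
      using exp_minus_ge[of "real i / real n"] by simp
  qed
  also have "\<dots> = exp (- (\<Sum>i<j. real i) / real n)"
    by (simp add: exp_sum[symmetric] sum_divide_distrib sum_negf)
  also have "(\<Sum>i<j. real i) = real j * (real j - 1) / 2"
    by (induction j) (auto simp: algebra_simps)
  finally show ?thesis
    by simp
qed

lemma crossing_exponent_le:
  fixes N J t :: real
  assumes N: "N \<ge> 1" and t: "0 \<le> t" "t \<le> 1 / sqrt N"
  shows "- (N - J) * (t + t^2/2) + N * t - J * (J - 1) / (2 * N) \<le> 1 / sqrt N + 1 / (2 * N)"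
proof -
  define A where "A = t + t^2/2 + 1/(2*N)"
  have Npos: "N > 0"
    using N by simp
  \<comment> \<open>completing the square in J\<close>
  have "N * A^2/2 - N*t^2/2 - (- (N - J) * (t + t^2/2) + N * t - J * (J - 1) / (2 * N))
        = (N*A - J)^2/(2*N)"
    using Npos by (simp add: A_def field_simps power2_eq_square)
  moreover have "(N*A - J)^2/(2*N) \<ge> 0"
    using Npos by simp
  moreover have "N * A^2/2 - N*t^2/2 = N * (A - t) * (A + t) / 2"
    by (simp add: algebra_simps power2_eq_square)
  ultimately have square:
    "- (N - J) * (t + t^2/2) + N * t - J * (J - 1) / (2 * N) \<le> N * (A - t) * (A + t) / 2"
    by linarith
  have "t^2 \<le> (1 / sqrt N)^2"
    using t by (intro power_mono) auto
  then have t2: "t^2 \<le> 1 / N"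
    using Npos by (simp add: power_divide)
  have Amt: "A - t \<le> 1 / N" "0 \<le> A - t"
    using t2 Npos by (auto simp: A_def field_simps)
  have Apt: "A + t \<le> 2 / sqrt N + 1 / N" "0 \<le> A + t"
    using t t2 Amt unfolding A_def by auto
  have "N * (A - t) * (A + t) \<le> N * (1 / N) * (2 / sqrt N + 1 / N)"
    using Amt Apt Npos by (intro mult_mono) (auto intro: mult_left_mono)
  also have "\<dots> = 2 * (1 / sqrt N + 1 / (2 * N))"
    using Npos by (simp add: field_simps)
  finally have "N * (A - t) * (A + t) / 2 \<le> 1 / sqrt N + 1 / (2 * N)"
    by simp
  with square show ?thesis
    by linarith
qed

lemma exp_eq_one_plus_mult_unique:
  fixes x g h :: real
  assumes g: "g > 0" "exp g = 1 + g * x" and h: "h > 0" "exp h = 1 + h * x"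
  shows "g = h"
proof -
  have False if a: "0 < g1" "exp g1 = 1 + g1 * x" "exp g2 = 1 + g2 * x" "g1 < g2" for g1 g2
  proof -
    \<comment> \<open>the chord from g1 to g2 forces the slope exp g1 of the convex function exp below x,
       while the chord from 0 to g1 forces it above x\<close>
    define e where "e = g2 - g1"
    have e: "e > 0"
      using a by (simp add: e_def)
    have "exp g1 * (1 + e) < exp g1 * exp e"
      using exp_minus_greater[of "- e"] e by simp
    also have "\<dots> = exp g2"
      by (simp add: e_def exp_add[symmetric])
    finally have "e * (1 + g1 * x) < e * x"
      using a by (simp add: e_def algebra_simps)
    then have lt: "1 + g1 * x < x"
      using e by simp
    have "(1 - g1) * exp g1 \<le> 1"
      using exp_minus_ge[of g1] by (simp add: exp_minus field_simps)
    then have "(1 - g1) * (1 + g1 * x) \<le> 1"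
      using a by simp
    moreover have "g1 * 1 < g1 * ((1 - g1) * x)"
      using lt a by (intro mult_strict_left_mono) (auto simp: algebra_simps)
    ultimately show False
      by (simp add: algebra_simps)
  qed
  then show ?thesis
    using g h by (metis linorder_cases)
qed

lemma exp_eq_one_plus_mult_exists:
  fixes x :: real
  assumes x: "x > 1"
  shows "\<exists>g>0. exp g = 1 + g * x"
proof -
  define d where "d = min 1 ((x - 1)/2)"
  have d: "0 < d" "d \<le> 1" "d < x - 1"
    using x by (auto simp: d_def min_def)
  have "exp d \<le> 1 + d + d^2"
    using exp_bound[of d] d by simp
  also have "\<dots> \<le> 1 + d * x"
    using mult_left_mono[of d "x - 1" d] d by (simp add: power2_eq_square algebra_simps)
  finally have below: "exp d - d * x \<le> 1"
    by simp
  have "(1 + 2*x)^2 \<le> exp (2*x) ^ 2"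
    using x exp_ge_add_one_self[of "2*x"] by (intro power_mono) auto
  also have "\<dots> = exp (4*x)"
    by (simp add: power2_eq_square exp_add[symmetric])
  finally have above: "1 \<le> exp (4*x) - 4*x * x"
    using x by (simp add: power2_eq_square algebra_simps)
  have "continuous_on {d..4 * x} (\<lambda>g. exp g - g * x)"
    by (intro continuous_intros)
  then obtain g where "d \<le> g" "exp g - g * x = 1"
    using IVT'[of "\<lambda>g. exp g - g * x" d 1 "4*x"] below above d x by auto
  then show ?thesis
    using d by (intro exI[of _ g]) auto
qed

lemma gamma_root:
  assumes "x > 1"
  shows "gamma_root x > 0" and "exp (gamma_root x) = 1 + gamma_root x * x"
proof -
  have "\<exists>!g. g > 0 \<and> exp g = 1 + g * x"
    using exp_eq_one_plus_mult_exists[OF assms] exp_eq_one_plus_mult_unique by blast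
  from theI'[OF this] show "gamma_root x > 0" "exp (gamma_root x) = 1 + gamma_root x * x"
    unfolding gamma_root_def by auto
qed

definition unif01 :: "real measure" where
  "unif01 = uniform_measure lborel {0..1}"

interpretation unif01: prob_space unif01
  unfolding unif01_def by (rule prob_space_uniform_measure) auto

interpretation unif01_product: product_sigma_finite "\<lambda>_::nat. unif01"
  unfolding product_sigma_finite_def using unif01.sigma_finite_measure_axioms by simp

lemma sets_unif01 [simp, measurable_cong]: "sets unif01 = sets borel"
  by (simp add: unif01_def)

lemma space_unif01 [simp]: "space unif01 = UNIV"
  by (simp add: unif01_def)

abbreviation unif_cube_on :: "nat set \<Rightarrow> (nat \<Rightarrow> real) measure" where
  "unif_cube_on I \<equiv> PiM I (\<lambda>_. unif01)"

lemma unif_cube_eq: "unif_cube n = unif_cube_on {..<n}"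
  by (simp add: unif_cube_def unif01_def)

lemma emeasure_unif01_atLeast:
  assumes "0 \<le> s" "s \<le> 1"
  shows "emeasure unif01 {s..} = ennreal (1 - s)"
proof -
  have "{0..1::real} \<inter> {s..} = {s..1}"
    using assms by auto
  then show ?thesis
    unfolding unif01_def using assms by (simp add: emeasure_uniform_measure divide_ennreal_def)
qed

lemma all_ge_eq_PiE:
  "{z \<in> space (unif_cube_on I). \<forall>k\<in>I. s \<le> z k} = PiE I (\<lambda>_. {s..})"
  by (auto simp: space_PiM PiE_def)

lemma emeasure_all_ge:
  assumes "finite I" "0 \<le> s" "s \<le> 1"
  shows "emeasure (unif_cube_on I) {z \<in> space (unif_cube_on I). \<forall>k\<in>I. s \<le> z k} = ennreal ((1 - s) ^ card I)"
  using emeasure_unif01_atLeast[OF assms(2,3)] assms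
  by (simp add: all_ge_eq_PiE unif01_product.emeasure_PiM prod_ennreal ennreal_power)

lemma sets_all_ge:
  assumes "finite I"
  shows "{z \<in> space (unif_cube_on I). \<forall>k\<in>I. s \<le> z k} \<in> sets (unif_cube_on I)"
  using assms by (auto simp: all_ge_eq_PiE intro!: sets_PiM_I_finite)

lemma nn_integral_exp_unif01_le:
  fixes C c s t0 :: real
  assumes C: "C \<ge> 0" and c: "c > 0" and s: "s \<le> t0"
  shows "(\<integral>\<^sup>+ y. indicator {s..t0} y * ennreal (C * exp (- c * y)) \<partial>unif01) \<le> ennreal (C * exp (- c * s) / c)"
proof -
  have "(\<integral>\<^sup>+ y. indicator {s..t0} y * ennreal (C * exp (- c * y)) \<partial>unif01)
      = (\<integral>\<^sup>+ y. indicator {s..t0} y * ennreal (C * exp (- c * y)) * indicator {0..1} y \<partial>lborel)"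
    unfolding unif01_def by (subst nn_integral_uniform_measure) (auto simp: divide_ennreal_def)
  also have "\<dots> \<le> (\<integral>\<^sup>+ y. ennreal (C * exp (- c * y)) * indicator {s..t0} y \<partial>lborel)"
    by (intro nn_integral_mono) (auto split: split_indicator)
  also have "\<dots> = ennreal (- C * exp (- c * t0) / c - (- C * exp (- c * s) / c))"
  proof (rule nn_integral_has_integral_lebesgue')
    show "((\<lambda>y. C * exp (- c * y)) has_integral (- C * exp (- c * t0) / c - (- C * exp (- c * s) / c))) {s..t0}"
      using c by (intro fundamental_theorem_of_calculus[OF s])
        (auto intro!: derivative_eq_intros simp: has_real_derivative_iff_has_vector_derivative[symmetric] field_simps)
  qed (use C in simp)
  also have "\<dots> \<le> ennreal (C * exp (- c * s) / c)"
    using C c by (intro ennreal_leI) (simp add: field_simps)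
  finally show ?thesis .
qed

lemma AE_unif_cube_on_nonneg:
  assumes "finite I"
  shows "AE z in unif_cube_on I. \<forall>k\<in>I. 0 \<le> z k"
proof -
  have "AE y in unif01. 0 \<le> y"
    unfolding unif01_def by (rule AE_uniform_measureI) auto
  then have "AE z in unif_cube_on I. 0 \<le> z k" if "k \<in> I" for k
    using AE_PiM_component[of I "\<lambda>_. unif01" k "\<lambda>y. 0 \<le> y"] unif01.prob_space_axioms that
    by simp
  then show ?thesis
    by (simp add: AE_finite_all[OF assms])
qed

definition count_le :: "nat set \<Rightarrow> (nat \<Rightarrow> real) \<Rightarrow> real \<Rightarrow> nat" where
  "count_le I z t = card {i\<in>I. z i \<le> t}"

text \<open>State of the exploration at time s: j points have been seen before s, and the points
  indexed by I are still to come.\<close>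
definition crosses_from :: "nat \<Rightarrow> real \<Rightarrow> nat set \<Rightarrow> real \<Rightarrow> nat \<Rightarrow> (nat \<Rightarrow> real) \<Rightarrow> bool" where
  "crosses_from n x I s j z \<longleftrightarrow> (\<forall>k\<in>I. s \<le> z k) \<and>
     (\<exists>t\<in>{s..1 / sqrt n}. x * (1 + real n * t) \<le> real j + real (count_le I z t))"

lemma real_count_le:
  assumes "finite I"
  shows "real (count_le I z t) = (\<Sum>i\<in>I. if z i \<le> t then 1 else 0)"
  unfolding count_le_def real_of_card using assms by (rule sum.inter_filter)

lemma crosses_from_cong:
  assumes "\<And>k. k \<in> I \<Longrightarrow> z k = z' k"
  shows "crosses_from n x I s j z = crosses_from n x I s j z'"
proof -
  have "{k\<in>I. z k \<le> t} = {k\<in>I. z' k \<le> t}" for t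
    using assms by auto
  then show ?thesis
    using assms by (simp add: crosses_from_def count_le_def)
qed

lemma count_le_at_last_point:
  assumes "finite I" and "{k\<in>I. z k \<le> t} \<noteq> {}"
  shows "\<exists>k\<in>I. z k \<le> t \<and> count_le I z t = count_le I z (z k)"
proof -
  define K where "K = {k\<in>I. z k \<le> t}"
  have fK: "finite K"
    using assms(1) by (simp add: K_def)
  then have "Max (z ` K) \<in> z ` K"
    using assms(2) by (intro Max_in) (auto simp: K_def)
  then obtain k where k: "k \<in> I" "z k \<le> t" "z k = Max (z ` K)"
    by (auto simp: K_def)
  have "z k' \<le> z k" if "k' \<in> K" for k'
    using Max_ge[of "z ` K" "z k'"] fK that k(3) by simp
  then have "{k'\<in>I. z k' \<le> t} = {k'\<in>I. z k' \<le> z k}"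
    using k(2) by (auto simp: K_def)
  then show ?thesis
    using k(1,2) by (auto simp: count_le_def)
qed

text \<open>The level x (1 + n t) increases in t, so it suffices to test t = s and the points
  themselves.\<close>
lemma crosses_from_iff_finite:
  assumes I: "finite I" and x: "x > 0"
  shows "crosses_from n x I s j z \<longleftrightarrow> (\<forall>k\<in>I. s \<le> z k) \<and>
     ((s \<le> 1 / sqrt n \<and> x * (1 + real n * s) \<le> real j + real (count_le I z s)) \<or>
      (\<exists>k\<in>I. s \<le> z k \<and> z k \<le> 1 / sqrt n \<and> x * (1 + real n * z k) \<le> real j + real (count_le I z (z k))))"
    (is "?L \<longleftrightarrow> ?A \<and> (?B \<or> ?C)")
proof
  assume ?L
  then obtain t where A: ?A and t: "s \<le> t" "t \<le> 1 / sqrt n"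
    and c: "x * (1 + real n * t) \<le> real j + real (count_le I z t)"
    unfolding crosses_from_def by auto
  have level_mono: "x * (1 + real n * u) \<le> x * (1 + real n * t)" if "u \<le> t" for u
    using that x by (intro mult_left_mono) (auto intro: mult_left_mono)
  show "?A \<and> (?B \<or> ?C)"
  proof (cases "{k\<in>I. z k \<le> t} = {}")
    case True
    then have "{k\<in>I. z k \<le> s} = {k\<in>I. z k \<le> t}"
      using t by auto
    then have "count_le I z s = count_le I z t"
      by (simp add: count_le_def)
    then have ?B
      using t c level_mono[OF t(1)] by simp
    with A show ?thesis
      by blast
  next
    case False
    then obtain k where k: "k \<in> I" "z k \<le> t" "count_le I z t = count_le I z (z k)"
      using count_le_at_last_point[OF I] by blast
    then have "x * (1 + real n * z k) \<le> real j + real (count_le I z (z k))"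
      using c level_mono[OF k(2)] by simp
    with A k(1,2) t have ?C
      by (intro bexI[of _ k]) auto
    with A show ?thesis
      by blast
  qed
next
  assume "?A \<and> (?B \<or> ?C)"
  then have A: ?A and "?B \<or> ?C"
    by auto
  from \<open>?B \<or> ?C\<close> show ?L
  proof
    assume ?B
    with A show ?L
      unfolding crosses_from_def by (intro conjI bexI[of _ s]) auto
  next
    assume ?C
    then obtain k where "k \<in> I" "s \<le> z k" "z k \<le> 1 / sqrt n"
      "x * (1 + real n * z k) \<le> real j + real (count_le I z (z k))"
      by blast
    with A show ?L
      unfolding crosses_from_def by (intro conjI bexI[of _ "z k"]) auto
  qed
qed

lemma pred_crosses_from:
  assumes I: "finite I" "J \<subseteq> I" and x: "x > 0" and f: "f \<in> borel_measurable (unif_cube_on I)"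
  shows "Measurable.pred (unif_cube_on I) (\<lambda>z. crosses_from n x J (f z) j z)"
proof -
  let ?B = "PiM I (\<lambda>_. borel :: real measure)"
  have eqs: "sets (unif_cube_on I) = sets ?B"
    by (intro sets_PiM_cong) auto
  have f' [measurable]: "f \<in> borel_measurable ?B"
    using f measurable_cong_sets[OF eqs refl] by auto
  have J: "finite J"
    using I finite_subset by auto
  have comp [measurable]: "(\<lambda>z. z k) \<in> borel_measurable ?B" for k
  proof (cases "k \<in> I")
    case True
    then show ?thesis
      using measurable_component_singleton[of k I "\<lambda>_. borel"] by auto
  next
    case False
    have "(\<lambda>z. undefined) \<in> borel_measurable ?B"
      by simp
    then show ?thesis
      by (rule measurable_cong[THEN iffD1, rotated]) (use False in \<open>auto simp: space_PiM PiE_def extensional_def\<close>)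
  qed
  have count_f: "(\<lambda>z. real j + real (count_le J z (f z))) \<in> borel_measurable ?B"
    unfolding real_count_le[OF J] by measurable
  have count_k: "(\<lambda>z. real j + real (count_le J z (z k))) \<in> borel_measurable ?B" for k
    unfolding real_count_le[OF J] by measurable
  have level_k: "(\<lambda>z. x * (1 + real n * z k)) \<in> borel_measurable ?B" for k
    by measurable
  have level_f: "(\<lambda>z. x * (1 + real n * f z)) \<in> borel_measurable ?B"
    by measurable
  have "Measurable.pred ?B (\<lambda>z. crosses_from n x J (f z) j z)"
    unfolding crosses_from_iff_finite[OF J x]
    by (intro pred_intros_logic pred_intros_finite[OF J] borel_measurable_le[folded pred_def]
        f' comp count_f count_k level_k level_f measurable_const) auto
  then show ?thesis
    using measurable_cong_sets[OF eqs refl] by auto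
qed

lemma crosses_from_first_point:
  assumes I: "finite I" and x: "x > 0" and cross: "crosses_from n x I s j z"
    and not_yet: "\<not> x * (1 + real n * s) \<le> real j"
  shows "\<exists>i\<in>I. s \<le> z i \<and> crosses_from n x (I - {i}) (z i) (Suc j) z"
proof -
  obtain t where A: "\<forall>k\<in>I. s \<le> z k" and t: "s \<le> t" "t \<le> 1 / sqrt n"
    and c: "x * (1 + real n * t) \<le> real j + real (count_le I z t)"
    using cross unfolding crosses_from_def by auto
  have level_s: "x * (1 + real n * s) \<le> x * (1 + real n * t)"
    using t x by (intro mult_left_mono) (auto intro: mult_left_mono)
  have "count_le I z t \<noteq> 0"
  proof
    assume "count_le I z t = 0"
    with c have "x * (1 + real n * t) \<le> real j"
      by simp
    with level_s not_yet show False
      by linarith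
  qed
  then have below_t: "{k\<in>I. z k \<le> t} \<noteq> {}"
    unfolding count_le_def by (metis card.empty)
  then have "Min (z ` I) \<in> z ` I"
    using I by (intro Min_in) auto
  then obtain i where i: "i \<in> I" "z i = Min (z ` I)"
    by auto
  have i_min: "z i \<le> z k" if "k \<in> I" for k
    using Min_le[of "z ` I" "z k"] I that i(2) by simp
  have zi: "z i \<le> t"
    using below_t i_min by force
  have "{k\<in>I. z k \<le> t} = insert i {k\<in>I - {i}. z k \<le> t}"
    using i(1) zi by auto
  then have "count_le I z t = Suc (count_le (I - {i}) z t)"
    unfolding count_le_def using I by simp
  with c have "x * (1 + real n * t) \<le> real (Suc j) + real (count_le (I - {i}) z t)"
    by simp
  then have "crosses_from n x (I - {i}) (z i) (Suc j) z"
    unfolding crosses_from_def using i_min zi t by (intro conjI ballI bexI[of _ t]) auto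
  then show ?thesis
    using i(1) A by blast
qed

definition crossing_event :: "nat \<Rightarrow> real \<Rightarrow> nat set \<Rightarrow> real \<Rightarrow> nat \<Rightarrow> (nat \<Rightarrow> real) set" where
  "crossing_event n x I s j = {z \<in> space (unif_cube_on I). crosses_from n x I s j z}"

definition first_point_event ::
    "nat \<Rightarrow> real \<Rightarrow> nat set \<Rightarrow> nat \<Rightarrow> real \<Rightarrow> nat \<Rightarrow> (nat \<Rightarrow> real) set" where
  "first_point_event n x I i s j =
     {z \<in> space (unif_cube_on I). s \<le> z i \<and> crosses_from n x (I - {i}) (z i) j z}"

lemma crossing_event_eq_empty: "1 / sqrt n < s \<Longrightarrow> crossing_event n x I s j = {}"
  by (auto simp: crossing_event_def crosses_from_def)

lemma sets_crossing_event:
  assumes "finite I" and "x > 0"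
  shows "crossing_event n x I s j \<in> sets (unif_cube_on I)"
  using pred_crosses_from[OF assms(1) subset_refl assms(2), of "\<lambda>_. s" n j]
  by (simp add: crossing_event_def pred_def)

lemma sets_first_point_event:
  assumes I: "finite I" "i \<in> I" and x: "x > 0"
  shows "first_point_event n x I i s j \<in> sets (unif_cube_on I)"
proof -
  have comp: "(\<lambda>z. z i) \<in> borel_measurable (unif_cube_on I)"
    using measurable_component_singleton[OF I(2), of "\<lambda>_. unif01"]
    by (simp add: measurable_cong_sets[OF refl sets_unif01])
  have "Measurable.pred (unif_cube_on I) (\<lambda>z. s \<le> z i \<and> crosses_from n x (I - {i}) (z i) j z)"
    using pred_crosses_from[OF I(1) _ x comp, of "I - {i}" n j] comp
    by (intro pred_intros_logic borel_measurable_le[folded pred_def]) auto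
  then show ?thesis
    by (simp add: first_point_event_def pred_def)
qed

lemma crossing_event_subset_first_points:
  assumes "finite I" and "x > 0" and "\<not> x * (1 + real n * s) \<le> real j"
  shows "crossing_event n x I s j \<subseteq> (\<Union>i\<in>I. first_point_event n x I i s (Suc j))"
  using crosses_from_first_point[OF assms(1,2) _ assms(3)]
  by (auto simp: crossing_event_def first_point_event_def)

lemma emeasure_crossing_event_le_power:
  assumes "finite I" and "0 \<le> s" and "s \<le> 1"
  shows "emeasure (unif_cube_on I) (crossing_event n x I s j) \<le> ennreal ((1 - s) ^ card I)"
proof -
  have "crossing_event n x I s j \<subseteq> {z \<in> space (unif_cube_on I). \<forall>k\<in>I. s \<le> z k}"
    by (auto simp: crossing_event_def crosses_from_def)
  then have "emeasure (unif_cube_on I) (crossing_event n x I s j)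
      \<le> emeasure (unif_cube_on I) {z \<in> space (unif_cube_on I). \<forall>k\<in>I. s \<le> z k}"
    by (rule emeasure_mono) (rule sets_all_ge[OF assms(1)])
  then show ?thesis
    by (simp add: emeasure_all_ge[OF assms])
qed

lemma indicator_first_point_event_upd:
  assumes "i \<in> I" and w: "w \<in> space (unif_cube_on (I - {i}))"
  shows "indicator (first_point_event n x I i s j) (w(i := y))
         = indicator {s..} y * (indicator (crossing_event n x (I - {i}) y j) w :: ennreal)"
proof -
  have "w(i := y) \<in> space (unif_cube_on I)"
    using PiE_fun_upd[of y "\<lambda>_. UNIV" i w "I - {i}"] assms by (simp add: space_PiM insert_absorb)
  moreover have "crosses_from n x (I - {i}) y j (w(i := y)) = crosses_from n x (I - {i}) y j w"
    by (intro crosses_from_cong) auto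
  ultimately show ?thesis
    using w by (auto simp: first_point_event_def crossing_event_def split: split_indicator)
qed

lemma emeasure_first_point_event_le:
  assumes I: "finite I" "i \<in> I" and x: "x > 0" and C: "C \<ge> 0" and c: "c > 0"
    and s: "s \<le> 1 / sqrt n"
    and rest: "\<And>y. y \<in> {s..1 / sqrt n} \<Longrightarrow>
      emeasure (unif_cube_on (I - {i})) (crossing_event n x (I - {i}) y j) \<le> ennreal (C * exp (- c * y))"
  shows "emeasure (unif_cube_on I) (first_point_event n x I i s j) \<le> ennreal (C * exp (- c * s) / c)"
proof -
  define F where "F = first_point_event n x I i s j"
  define E where "E y = crossing_event n x (I - {i}) y j" for y
  have F_sets: "F \<in> sets (unif_cube_on I)"
    unfolding F_def using I x by (rule sets_first_point_event)
  have E_sets: "E y \<in> sets (unif_cube_on (I - {i}))" for y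
    unfolding E_def using I x by (intro sets_crossing_event) auto
  have slice: "(\<integral>\<^sup>+ w. indicator F (w(i := y)) \<partial>unif_cube_on (I - {i}))
      \<le> indicator {s..1 / sqrt n} y * ennreal (C * exp (- c * y))" for y
  proof -
    have "(\<integral>\<^sup>+ w. indicator F (w(i := y)) \<partial>unif_cube_on (I - {i}))
        = (\<integral>\<^sup>+ w. indicator {s..} y * indicator (E y) w \<partial>unif_cube_on (I - {i}))"
      unfolding F_def E_def using I(2) by (intro nn_integral_cong indicator_first_point_event_upd)
    also have "\<dots> = indicator {s..} y * emeasure (unif_cube_on (I - {i})) (E y)"
      using E_sets by (rule nn_integral_cmult_indicator)
    also have "\<dots> \<le> indicator {s..1 / sqrt n} y * ennreal (C * exp (- c * y))"
      using rest[of y] crossing_event_eq_empty[of n y x "I - {i}" j]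
      by (cases "y \<le> 1 / sqrt n") (auto simp: E_def split: split_indicator)
    finally show ?thesis .
  qed
  have "emeasure (unif_cube_on I) F = (\<integral>\<^sup>+ z. indicator F z \<partial>unif_cube_on I)"
    using F_sets by simp
  also have "\<dots> = (\<integral>\<^sup>+ y. (\<integral>\<^sup>+ w. indicator F (w(i := y)) \<partial>unif_cube_on (I - {i})) \<partial>unif01)"
    using unif01_product.product_nn_integral_insert_rev[of "I - {i}" i "indicator F"] F_sets I
    by (simp add: insert_absorb)
  also have "\<dots> \<le> (\<integral>\<^sup>+ y. indicator {s..1 / sqrt n} y * ennreal (C * exp (- c * y)) \<partial>unif01)"
    by (intro nn_integral_mono slice)
  also have "\<dots> \<le> ennreal (C * exp (- c * s) / c)"
    by (rule nn_integral_exp_unif01_le[OF C c s])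
  finally show ?thesis
    by (simp add: F_def)
qed

definition potential :: "nat \<Rightarrow> real \<Rightarrow> real \<Rightarrow> real \<Rightarrow> nat \<Rightarrow> real" where
  "potential n x g s j = exp (g * j - (1 + g * x) * n * s) * real n ^ j / (\<Prod>i<j. real (n - i))"

lemma potential_nonneg: "potential n x g s j \<ge> 0"
  unfolding potential_def by (intro divide_nonneg_nonneg mult_nonneg_nonneg prod_nonneg) auto

lemma potential_eq_potential_0: "potential n x g s j = potential n x g 0 j * exp (- ((1 + g * x) * n) * s)"
  by (simp add: potential_def mult_exp_exp algebra_simps)

lemma potential_Suc:
  assumes "j < n" and "exp g = 1 + g * x"
  shows "real (n - j) * potential n x g s (Suc j) = (1 + g * x) * n * potential n x g s j"
proof -
  have "exp (g * Suc j - (1 + g * x) * n * s) = exp g * exp (g * j - (1 + g * x) * n * s)"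
    by (simp add: mult_exp_exp algebra_simps)
  then have e: "exp (g * Suc j - (1 + g * x) * n * s) = (1 + g * x) * exp (g * j - (1 + g * x) * n * s)"
    using assms(2) by simp
  have "(\<Prod>i<j. real (n - i)) > 0" "real (n - j) > 0"
    using assms(1) by (auto intro!: prod_pos)
  then show ?thesis
    unfolding potential_def e prod.lessThan_Suc by (simp add: field_simps)
qed

lemma power_one_minus_le_potential:
  fixes n j :: nat and s x g :: real
  assumes n: "n \<ge> 1" and j: "j \<le> n" and s: "0 \<le> s" "s \<le> 1 / sqrt n"
    and g: "g \<ge> 0" and crossed: "x * (1 + n * s) \<le> j"
  shows "(1 - s) ^ (n - j) \<le> exp (1 / sqrt n + 1 / (2 * real n) - g * x) * potential n x g s j"
proof -
  define F where "F = (\<Prod>i<j. real (n - i))"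
  have F: "F > 0" "real n ^ j > 0"
    using j n by (auto simp: F_def intro!: prod_pos)
  have "1 / sqrt n \<le> 1"
    using n by (simp add: divide_le_eq)
  then have s1: "s \<le> 1"
    using s by linarith
  have "(1 - s) ^ (n - j) \<le> exp (- s - s^2/2) ^ (n - j)"
    using s s1 one_minus_le_exp_quadratic[OF s(1)] by (intro power_mono) auto
  also have "\<dots> = exp (- real (n - j) * (s + s^2/2))"
    by (simp add: exp_of_nat_mult[symmetric] algebra_simps)
  finally have "(1 - s) ^ (n - j) * (F / real n ^ j)
      \<le> exp (- real (n - j) * (s + s^2/2)) * exp (- (real j * (real j - 1) / (2 * real n)))"
    using falling_fact_div_power_le_exp[OF j] s1 F by (intro mult_mono) (auto simp: F_def)
  also have "\<dots> \<le> exp (1 / sqrt n + 1 / (2 * real n) - real n * s)"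
    using crossing_exponent_le[of "real n" s "real j"] n s j
    by (simp only: mult_exp_exp exp_le_cancel_iff of_nat_diff) simp
  also have "\<dots> \<le> exp (1 / sqrt n + 1 / (2 * real n) - g * x) * exp (g * j - (1 + g * x) * n * s)"
  proof -
    have "g * (x * (1 + n * s)) \<le> g * j"
      using crossed g by (rule mult_left_mono)
    then show ?thesis
      unfolding mult_exp_exp exp_le_cancel_iff by (simp add: algebra_simps)
  qed
  finally show ?thesis
    using F by (simp add: potential_def F_def field_simps)
qed

text \<open>Each of the n - j remaining points contributes the integral of potential(y, j + 1) over
  y \<ge> s, which is potential(s, j + 1)/c; together they give back potential(s, j).\<close>
lemma sum_potential_Suc_le:
  assumes "card I = n - j" and "exp g = 1 + g * x" and "K \<ge> 0" and "c = (1 + g * x) * n" and "c > 0"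
  shows "(\<Sum>i\<in>I. ennreal (K * potential n x g s (Suc j) / c)) \<le> ennreal (K * potential n x g s j)"
proof (cases "j < n")
  case True
  have "real (card I) * potential n x g s (Suc j) = c * potential n x g s j"
    using potential_Suc[OF True assms(2)] assms(1,4) by simp
  then have "real (card I) * (K * potential n x g s (Suc j) / c) = K * potential n x g s j"
    using assms(5) by (simp add: field_simps)
  then show ?thesis
    using assms(3,5) by (subst sum_ennreal) (auto simp: potential_nonneg)
next
  case False
  then show ?thesis
    using assms(1,3) by (simp add: potential_nonneg)
qed

lemma emeasure_crossing_event_le_potential:
  fixes I :: "nat set"
  assumes n: "n \<ge> 1" and x: "x > 1" and g: "g > 0" "exp g = 1 + g * x"
    and I: "finite I" "card I \<le> n" and s: "0 \<le> s"
  shows "emeasure (unif_cube_on I) (crossing_event n x I s (n - card I))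
         \<le> ennreal (exp (1 / sqrt n + 1 / (2 * real n) - g * x) * potential n x g s (n - card I))"
  using I s
proof (induction "card I" arbitrary: I s rule: less_induct)
  case less
  define j where "j = n - card I"
  define K where "K = exp (1 / sqrt n + 1 / (2 * real n) - g * x)"
  have IH: "\<And>J y. card J < card I \<Longrightarrow> finite J \<Longrightarrow> card J \<le> n \<Longrightarrow> 0 \<le> y \<Longrightarrow>
      emeasure (unif_cube_on J) (crossing_event n x J y (n - card J)) \<le> ennreal (K * potential n x g y (n - card J))"
    using less(1) unfolding K_def by blast
  have I: "finite I" "card I \<le> n" and s: "0 \<le> s"
    using less by auto
  have j: "j \<le> n" "card I = n - j"
    using I by (auto simp: j_def)
  have x0: "x > 0"
    using x by simp
  have t0_le_1: "1 / sqrt n \<le> 1"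
    using n by (simp add: divide_le_eq)
  consider "1 / sqrt n < s" | "s \<le> 1" "s \<le> 1 / sqrt n" "x * (1 + n * s) \<le> j"
    | "s \<le> 1 / sqrt n" "\<not> x * (1 + n * s) \<le> j"
    using t0_le_1 by linarith
  then have "emeasure (unif_cube_on I) (crossing_event n x I s j) \<le> ennreal (K * potential n x g s j)"
  proof cases
    case 1
    then show ?thesis
      by (simp add: crossing_event_eq_empty)
  next
    case 2
    have "emeasure (unif_cube_on I) (crossing_event n x I s j) \<le> ennreal ((1 - s) ^ (n - j))"
      using emeasure_crossing_event_le_power[OF I(1) s 2(1)] j by simp
    also have "\<dots> \<le> ennreal (K * potential n x g s j)"
      using power_one_minus_le_potential[OF n j(1) s 2(2) _ 2(3)] g by (simp add: K_def ennreal_leI)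
    finally show ?thesis .
  next
    case 3
    define c where "c = (1 + g * x) * n"
    have c: "c > 0"
      using n g x0 by (simp add: c_def add_pos_pos)
    have potential_c: "potential n x g y (Suc j) = potential n x g 0 (Suc j) * exp (- c * y)" for y
      unfolding c_def by (rule potential_eq_potential_0)
    have first_le: "emeasure (unif_cube_on I) (first_point_event n x I i s (Suc j))
        \<le> ennreal (K * potential n x g s (Suc j) / c)" if "i \<in> I" for i
    proof -
      have "card I > 0"
        using that I(1) card_gt_0_iff by blast
      then have "card (I - {i}) < card I" "n - card (I - {i}) = Suc j"
        using that I j by (auto simp: card_Diff_singleton)
      then have "emeasure (unif_cube_on (I - {i})) (crossing_event n x (I - {i}) y (Suc j))
          \<le> ennreal (K * potential n x g 0 (Suc j) * exp (- c * y))" if "y \<in> {s..1 / sqrt n}" for y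
        using IH[of "I - {i}" y] I that s by (simp add: potential_c[of y] mult.assoc)
      from emeasure_first_point_event_le[OF I(1) that x0 _ c 3(1) this]
      show ?thesis
        by (simp add: K_def potential_nonneg potential_c[of s] mult.assoc)
    qed
    have "emeasure (unif_cube_on I) (crossing_event n x I s j)
        \<le> emeasure (unif_cube_on I) (\<Union>i\<in>I. first_point_event n x I i s (Suc j))"
      using crossing_event_subset_first_points[OF I(1) x0 3(2)] sets_first_point_event I(1) x0
      by (intro emeasure_mono) auto
    also have "\<dots> \<le> (\<Sum>i\<in>I. emeasure (unif_cube_on I) (first_point_event n x I i s (Suc j)))"
      using sets_first_point_event I(1) x0 by (intro emeasure_subadditive_finite) auto
    also have "\<dots> \<le> (\<Sum>i\<in>I. ennreal (K * potential n x g s (Suc j) / c))"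
      by (intro sum_mono first_le)
    also have "\<dots> \<le> ennreal (K * potential n x g s j)"
      using j(2) g(2) c by (intro sum_potential_Suc_le) (simp_all add: K_def c_def)
    finally show ?thesis .
  qed
  then show ?case
    by (simp add: K_def j_def)
qed

lemma Ncount_ratio_le_last_point:
  fixes U :: "nat \<Rightarrow> real"
  assumes t: "0 \<le> t"
  shows "\<exists>c \<in> {0..t} \<inter> insert 0 (U ` {..<n}).
           real (Ncount n t U) / (1 + real n * t) \<le> real (Ncount n c U) / (1 + real n * c)"
proof -
  define D where "D = insert 0 (U ` {i. i < n \<and> U i \<le> t})"
  define c where "c = Max D"
  have fD: "finite D"
    by (simp add: D_def)
  have cD: "c \<in> D"
    unfolding c_def using fD by (intro Max_in) (auto simp: D_def)
  have ge: "d \<le> c" if "d \<in> D" for d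
    unfolding c_def using fD that by (rule Max_ge)
  have c0: "0 \<le> c"
    using ge[of 0] by (simp add: D_def)
  have ct: "c \<le> t"
    using cD t unfolding D_def by auto
  have "{i\<in>{..<n}. U i \<le> t} = {i\<in>{..<n}. U i \<le> c}"
    using ge ct unfolding D_def by force
  then have "Ncount n t U = Ncount n c U"
    by (simp add: Ncount_def)
  moreover have "real (Ncount n c U) / (1 + real n * t) \<le> real (Ncount n c U) / (1 + real n * c)"
  proof (rule divide_left_mono)
    show "1 + real n * c \<le> 1 + real n * t"
      using ct by (simp add: mult_left_mono)
    show "0 < (1 + real n * t) * (1 + real n * c)"
      using t c0 by (simp add: add_pos_nonneg)
  qed simp
  ultimately have "real (Ncount n t U) / (1 + real n * t) \<le> real (Ncount n c U) / (1 + real n * c)"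
    by simp
  moreover have "c \<in> {0..t} \<inter> insert 0 (U ` {..<n})"
    using cD c0 ct unfolding D_def by auto
  ultimately show ?thesis
    by blast
qed

lemma SUP_ratio_ge_imp_crossing:
  fixes U :: "nat \<Rightarrow> real" and t0 x :: real
  assumes t0: "t0 \<ge> 0"
    and sup: "x \<le> (SUP t\<in>{0..t0}. real (Ncount n t U) / (1 + real n * t))"
  shows "\<exists>t\<in>{0..t0}. x * (1 + real n * t) \<le> real (Ncount n t U)"
proof -
  define f where "f t = real (Ncount n t U) / (1 + real n * t)" for t
  define C where "C = {0..t0} \<inter> insert 0 (U ` {..<n})"
  have fC: "finite C"
    by (simp add: C_def)
  have "Max (f ` C) \<in> f ` C"
    using fC t0 by (intro Max_in) (auto simp: C_def)
  then obtain c where c: "c \<in> C" "f c = Max (f ` C)"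
    by auto
  have "f t \<le> f c" if t: "t \<in> {0..t0}" for t
  proof -
    have "0 \<le> t"
      using t by simp
    then obtain c' where "c' \<in> {0..t} \<inter> insert 0 (U ` {..<n})"
      "real (Ncount n t U) / (1 + real n * t) \<le> real (Ncount n c' U) / (1 + real n * c')"
      using Ncount_ratio_le_last_point[where n = n and U = U] by blast
    then have "c' \<in> C" "f t \<le> f c'"
      using t by (auto simp: C_def f_def)
    moreover have "f c' \<le> Max (f ` C)"
      using fC \<open>c' \<in> C\<close> by (intro Max_ge) auto
    ultimately show ?thesis
      using c(2) by simp
  qed
  then have sup_le: "(SUP t\<in>{0..t0}. f t) \<le> f c"
    using t0 by (intro cSUP_least) auto
  have c0: "c \<in> {0..t0}"
    using c(1) by (simp add: C_def)
  have "x \<le> f c"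
    using sup sup_le unfolding f_def by linarith
  moreover have "1 + real n * c > 0"
    using c0 by (simp add: add_pos_nonneg)
  ultimately show ?thesis
    using c0 unfolding f_def by (intro bexI[of _ c]) (auto simp: pos_le_divide_eq mult.commute)
qed

theorem lemmaC2:
  fixes n :: nat and x :: real
  assumes "n \<ge> 1" and "x > 1"
  shows "measure (unif_cube n)
           {U \<in> space (unif_cube n).
              (SUP t\<in>{0..1 / sqrt (real n)}. real (Ncount n t U) / (1 + real n * t)) \<ge> x}
         \<le> exp (1 / sqrt (real n) + 1 / (2 * real n)) * exp (- gamma_root x * x)"
proof -
  define M where "M = unif_cube_on {..<n}"
  define S where "S = {U \<in> space M. (SUP t\<in>{0..1 / sqrt (real n)}. real (Ncount n t U) / (1 + real n * t)) \<ge> x}"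
  have "AE U in M. U \<in> S \<longrightarrow> U \<in> crossing_event n x {..<n} 0 0"
    using AE_unif_cube_on_nonneg[OF finite_lessThan] unfolding M_def
  proof eventually_elim
    case (elim U)
    show ?case
    proof
      assume "U \<in> S"
      then obtain t where "t \<in> {0..1 / sqrt n}" "x * (1 + real n * t) \<le> real (Ncount n t U)"
        using SUP_ratio_ge_imp_crossing[of "1 / sqrt n" x n U] by (auto simp: S_def)
      then show "U \<in> crossing_event n x {..<n} 0 0"
        using elim \<open>U \<in> S\<close>
        by (auto simp: S_def M_def crossing_event_def crosses_from_def count_le_def Ncount_def)
    qed
  qed
  then have "emeasure M S \<le> emeasure M (crossing_event n x {..<n} 0 0)"
    using sets_crossing_event[of "{..<n}" x n 0 0] assms(2) by (intro emeasure_mono_AE) (auto simp: M_def)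
  also have "\<dots> \<le> ennreal (exp (1 / sqrt n + 1 / (2 * real n) - gamma_root x * x))"
    using emeasure_crossing_event_le_potential[OF assms gamma_root[OF assms(2)], of "{..<n}" 0]
    by (simp add: M_def potential_def)
  finally have "measure M S \<le> exp (1 / sqrt n + 1 / (2 * real n) - gamma_root x * x)"
    by (simp add: measure_def enn2real_leI)
  then show ?thesis
    by (simp add: M_def S_def unif_cube_eq mult_exp_exp)
qed

end
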